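(* Let $q$ be a prime power and $N,m,k,r$ positive integers with $m\le N$, $k\le m$, $r<k$. Let $\mathcal{C}\subseteq\mathbb{F}_{q^N}^m$ be an $[N\times m,\,Nk,\,m-k+1]$ Gabidulin MRD code, and assume either (Case 1) $m\equiv 0\pmod r$, or (Case 2) $m\equiv k\equiv j\pmod r$ for some $1\le j<r$. Partition the $m$ coordinates into $\lfloor m/r\rfloor$ disjoint groups $G_i$ of size $r$, together with (in Case 2 only) one additional group $\widehat{G}$ of size $j$. Define $C^{\mathrm{loc}}$ as the set of vectors obtained from each $\mathbf{c}\in\mathcal{C}$ by appending, for each group $G_i$, a parity symbol $p_i=\sum_{s\in G_i}c_s$, and (in Case 2) a parity symbol $\widehat{p}=\sum_{s\in\widehat{G}}c_s$. Let $n$ be the length of $C^{\mathrm{loc}}$ (so $n=m+m/r$ in Case 1 and $n=m+\lceil m/r\rceil$ in Case 2). Then $C^{\mathrm{loc}}$ is an $[n,k,d_{\min}]$ code over $\mathbb{F}_{q^N}$ with minimum Hamming distance $d_{\min}=n-k+2-\lceil k/r\rceil$.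
   Context: The Gabidulin code $\mathcal{C}$ with these parameters consists of the vectors $[f(g_1),\dots,f(g_m)]$, where $g_1,\dots,g_m\in\mathbb{F}_{q^N}$ are fixed and linearly independent over $\mathbb{F}_q$, and $f$ ranges over linearized polynomials $f(x)=\sum_{i=0}^{k-1}a_ix^{q^i}$ with $a_i\in\mathbb{F}_{q^N}$; its minimum rank distance is $m-k+1$. The code $C^{\mathrm{loc}}$ is regarded as a linear code over $\mathbb{F}_{q^N}$ with the Hamming metric. *)

theory Defs
  imports Complex_Main "HOL-Computational_Algebra.Primes" "HOL-Library.Cardinality"
begin

definition prime_power :: "nat \<Rightarrow> bool" where
  "prime_power q \<longleftrightarrow> (\<exists>p e. prime p \<and> e > 0 \<and> q = p ^ e)"

text \<open>The prime subfield-like copy of F_q inside F_{q^N}: elements fixed by Frobenius x -> x^q.\<close>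
definition base_field :: "nat \<Rightarrow> 'a::field set" where
  "base_field q = {x. x ^ q = x}"

definition lin_indep_over_Fq :: "nat \<Rightarrow> 'a::field list \<Rightarrow> bool" where
  "lin_indep_over_Fq q gs \<longleftrightarrow>
     (\<forall>c::nat \<Rightarrow> 'a. (\<forall>i<length gs. c i \<in> base_field q) \<and>
         (\<Sum>i<length gs. c i * gs ! i) = 0 \<longrightarrow> (\<forall>i<length gs. c i = 0))"

definition gabidulin :: "nat \<Rightarrow> nat \<Rightarrow> 'a::field list \<Rightarrow> 'a list set" where
  "gabidulin q k gs = {map (\<lambda>g. \<Sum>i<k. a i * g ^ (q ^ i)) gs | a. True}"

definition local_code :: "nat set list \<Rightarrow> 'a::field list set \<Rightarrow> 'a list set" where
  "local_code Gs C = {c @ map (\<lambda>G. \<Sum>s\<in>G. c ! s) Gs | c. c \<in> C}"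

definition lincomb :: "nat \<Rightarrow> (nat \<Rightarrow> 'a::field) \<Rightarrow> 'a list list \<Rightarrow> 'a list" where
  "lincomb n a B = map (\<lambda>t. \<Sum>i<length B. a i * (B ! i) ! t) [0..<n]"

definition linear_code_dim :: "nat \<Rightarrow> nat \<Rightarrow> 'a::field list set \<Rightarrow> bool" where
  "linear_code_dim n k C \<longleftrightarrow>
     (\<exists>B. length B = k \<and> (\<forall>b\<in>set B. length b = n) \<and>
          C = {lincomb n a B | a. True} \<and>
          (\<forall>a. lincomb n a B = replicate n 0 \<longrightarrow> (\<forall>i<k. a i = 0)))"

definition hamming_dist :: "'a list \<Rightarrow> 'a list \<Rightarrow> nat" where
  "hamming_dist x y = card {i. i < length x \<and> x ! i \<noteq> y ! i}"

definition min_dist :: "'a list set \<Rightarrow> nat" where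
  "min_dist C = Min {hamming_dist x y | x y. x \<in> C \<and> y \<in> C \<and> x \<noteq> y}"

end

theory Submission
  imports Defs "HOL-Computational_Algebra.Polynomial" "HOL-Library.FuncSet"
begin

text \<open>A nonzero codeword \<open>c\<^sub>s = f(g\<^sub>s)\<close> comes from a nonzero \<open>q\<close>-linearized polynomial \<open>f\<close> of
  \<open>q\<close>-degree below \<open>k\<close>, and \<open>f\<close> is \<open>\<bbbF>\<^sub>q\<close>-linear. So every relation \<open>\<Sum>\<^sub>s \<lambda>\<^sub>s c\<^sub>s = 0\<close> with
  \<open>\<lambda> \<in> \<bbbF>\<^sub>q\<^sup>m\<close> yields a root \<open>\<Sum>\<^sub>s \<lambda>\<^sub>s g\<^sub>s\<close> of \<open>f\<close>, distinct relations yield distinct roots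
  (the \<open>g\<^sub>s\<close> are independent), and hence there are at most \<open>q\<^sup>k\<^sup>-\<^sup>1\<close> relations.
  Relations may be chosen freely on the zero coordinates and, constantly on the remaining
  coordinates, on each group with vanishing parity that is not entirely zero; so the numbers of
  these zero coordinates and zero parities add up to at most \<open>k - 1\<close>. Consequently a nonzero
  local codeword has at most \<open>k - 1 + |A|\<close> zeros, where \<open>A\<close> is a set of groups of total size at
  most \<open>k - 1\<close>, and the group sizes force \<open>|A| \<le> \<lceil>k/r\<rceil> - 1\<close>. Conversely, since fewer than \<open>k\<close>
  linear conditions on the \<open>k\<close> coefficients always have a nonzero solution, a codeword can be made
  to vanish on \<open>\<lceil>k/r\<rceil> - 1\<close> whole groups plus enough coordinates to reach \<open>k - 1\<close> zeros.\<close>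

section \<open>Finite fields and linearized polynomials\<close>

lemma prime_CHAR_finite_field: "prime CHAR('a::{finite,field})"
  using prime_CHAR_semidom[where ?'a = 'a] finite_imp_CHAR_pos[where ?'a = 'a] by auto

lemma of_nat_card_eq_0: "of_nat CARD('a::{finite,ring_1}) = (0::'a)"
proof -
  \<comment> \<open>translation by \<open>1\<close> permutes the finite ring\<close>
  have "(\<Sum>y\<in>(UNIV::'a set). 1 + y) = (\<Sum>y\<in>UNIV. y)"
    by (rule sum.reindex_bij_witness[of _ "\<lambda>y. y - 1" "\<lambda>y. 1 + y"]) auto
  then show ?thesis
    by (simp add: sum.distrib)
qed

lemma prime_power_card_eq_CHAR_power:
  assumes "prime_power q" and "CARD('a::{finite,field}) = q ^ N" and "0 < N"
  obtains e where "0 < e" and "q = CHAR('a) ^ e"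
proof -
  obtain p e where p: "prime p" "0 < e" "q = p ^ e"
    using assms(1) unfolding prime_power_def by auto
  have "CHAR('a) dvd p ^ (e * N)"
    using of_nat_card_eq_0[where ?'a = 'a] of_nat_eq_0_iff_char_dvd assms(2) p(3)
    by (metis power_mult)
  then have "CHAR('a) dvd p"
    using prime_CHAR_finite_field prime_dvd_power by blast
  then have "CHAR('a) = p"
    using p(1) prime_CHAR_finite_field primes_dvd_imp_eq by blast
  with p that show thesis by simp
qed

lemma power_card_eq_self: "(x::'a::{finite,field}) ^ CARD('a) = x"
proof (cases "x = 0")
  case True
  then show ?thesis
    using finite_UNIV_card_ge_0[where ?'a = 'a] by (simp add: zero_power)
next
  case False
  let ?U = "UNIV - {0::'a}"
  \<comment> \<open>multiplication by \<open>x\<close> permutes the nonzero elements\<close>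
  have "x ^ card ?U * \<Prod>?U = (\<Prod>y\<in>?U. x * y)"
    by (simp add: prod.distrib)
  also have "\<dots> = \<Prod>?U"
    by (rule prod.reindex_bij_witness[of _ "\<lambda>y. y / x" "\<lambda>y. x * y"]) (use False in auto)
  finally have unit: "x ^ card ?U = 1"
    using prod_zero_iff[of ?U "\<lambda>y. y"] by auto
  have "CARD('a) = Suc (card ?U)"
    using card_Diff_singleton[of 0 "UNIV :: 'a set"] finite_UNIV_card_ge_0[where ?'a = 'a] by simp
  then have "x ^ CARD('a) = x * x ^ card ?U"
    by (simp only: power_Suc)
  then show ?thesis
    by (simp only: unit mult_1_right)
qed

lemma frobenius_add:
  fixes x y :: "'a::comm_semiring_1"
  assumes "prime CHAR('a)" and "q = CHAR('a) ^ e"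
  shows "(x + y) ^ (q ^ i) = x ^ (q ^ i) + y ^ (q ^ i)"
  using freshmans_dream'[OF assms(1), of "q ^ i" "e * i"] assms by (simp add: power_mult)

lemma frobenius_diff:
  fixes x y :: "'a::comm_ring_1"
  assumes "prime CHAR('a)" and "q = CHAR('a) ^ e"
  shows "(x - y) ^ (q ^ i) = x ^ (q ^ i) - y ^ (q ^ i)"
  using frobenius_add[OF assms, of "x - y" y i] by (simp add: algebra_simps)

lemma frobenius_sum:
  fixes f :: "'b \<Rightarrow> 'a::comm_semiring_1"
  assumes "prime CHAR('a)" and "q = CHAR('a) ^ e"
  shows "sum f A ^ (q ^ i) = (\<Sum>x\<in>A. f x ^ (q ^ i))"
  using freshmans_dream_sum'[OF assms(1), of "q ^ i" "e * i"] assms by (simp add: power_mult)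

lemma two_le_prime_power:
  assumes "prime p" and "0 < e"
  shows "2 \<le> (p::nat) ^ e"
  using prime_ge_2_nat[OF assms(1)] self_le_power[of p e] assms(2) by simp

lemma degree_monom_diff_monom_1:
  assumes "1 < n"
  shows "degree (monom 1 n - monom (1::'a::field) 1) = n"
proof -
  have "degree (monom 1 n + - monom (1::'a) 1) = degree (monom (1::'a) n)"
    by (rule degree_add_eq_left) (use assms in \<open>simp add: degree_monom_eq\<close>)
  then show ?thesis
    by (simp add: degree_monom_eq)
qed

lemma X_power_minus_X_dvd:
  assumes "prime CHAR('a::field)" and "q = CHAR('a) ^ e"
  shows "monom 1 q - monom (1::'a) 1 dvd monom 1 (q ^ N) - monom 1 1"
proof -
  have char_poly: "prime CHAR('a poly)" and q_poly: "q = CHAR('a poly) ^ e"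
    using assms by simp_all
  \<comment> \<open>\<open>X^(q^N) - X\<close> telescopes into the Frobenius powers \<open>(X^q - X)^(q^i)\<close>\<close>
  have "monom 1 (q ^ N) - monom (1::'a) 1 = (\<Sum>i<N. monom 1 (q ^ Suc i) - monom 1 (q ^ i))"
    by (subst sum_lessThan_telescope) simp
  also have "\<dots> = (\<Sum>i<N. (monom 1 q - monom 1 1) ^ (q ^ i))"
    unfolding frobenius_diff[OF char_poly q_poly] by (simp add: monom_power mult.commute)
  finally show ?thesis
    using assms prime_gt_0_nat[of "CHAR('a)"] by (auto intro!: dvd_sum dvd_power)
qed

lemma card_base_field_ge:
  assumes q: "q = CHAR('a::{finite,field}) ^ e" "0 < e"
    and card: "CARD('a) = q ^ N" "0 < N"
  shows "q \<le> card (base_field q :: 'a set)"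
proof -
  have q2: "2 \<le> q"
    using two_le_prime_power[OF prime_CHAR_finite_field q(2)] q(1) by simp
  have qN: "q \<le> q ^ N" "1 < q ^ N"
    using self_le_power[of q N] card(2) q2 by simp_all
  define P :: "'a poly" where "P = monom 1 q - monom 1 1"
  define R :: "'a poly" where "R = monom 1 (q ^ N) - monom 1 1"
  obtain h where h: "R = P * h"
    using X_power_minus_X_dvd[OF prime_CHAR_finite_field q(1)] unfolding P_def R_def ..
  have deg: "degree P = q" "degree R = q ^ N"
    unfolding P_def R_def by (rule degree_monom_diff_monom_1, use q2 qN(2) in simp)+
  then have "P \<noteq> 0" "h \<noteq> 0"
    using q2 qN(2) h by auto
  then have "degree h = q ^ N - q"
    using degree_mult_eq[of P h] h deg by simp
  then have roots_h: "card {x. poly h x = 0} \<le> q ^ N - q"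
    using card_poly_roots_bound[OF \<open>h \<noteq> 0\<close>] by simp
  \<comment> \<open>every element is a root of \<open>R = X^(q^N) - X\<close>, hence of \<open>P\<close> or of \<open>h\<close>\<close>
  have "poly R x = 0" for x :: 'a
    unfolding R_def using power_card_eq_self[of x] card(1) by (simp add: poly_monom)
  then have "UNIV = {x. poly P x = 0} \<union> {x::'a. poly h x = 0}"
    using h by auto
  then have "q ^ N \<le> card {x. poly P x = 0} + card {x::'a. poly h x = 0}"
    using card(1) card_Un_le[of "{x. poly P x = 0}" "{x::'a. poly h x = 0}"] by simp
  moreover have "base_field q = {x::'a. poly P x = 0}"
    unfolding P_def base_field_def by (auto simp: poly_monom)
  then have "card (base_field q :: 'a set) = card {x. poly P x = 0}"
    by simp
  ultimately show ?thesis
    using roots_h qN by linarith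
qed

lemma card_linearized_poly_roots_le:
  fixes a :: "nat \<Rightarrow> 'a::idom"
  assumes "2 \<le> q" and "\<exists>i<k. a i \<noteq> 0"
  shows "card {x. (\<Sum>i<k. a i * x ^ (q ^ i)) = 0} \<le> q ^ (k - 1)"
proof -
  define P where "P = (\<Sum>i<k. monom (a i) (q ^ i))"
  obtain i0 where i0: "i0 < k" "a i0 \<noteq> 0"
    using assms(2) by auto
  have "coeff P (q ^ i0) = a i0"
    unfolding P_def coeff_sum coeff_monom using i0 assms(1)
    by (subst sum.mono_neutral_right[of "{..<k}" "{i0}"]) (auto simp: power_inject_exp)
  then have "P \<noteq> 0"
    using i0 by auto
  moreover have "degree P \<le> q ^ (k - 1)"
  proof (rule degree_le, intro allI impI)
    fix j assume j: "q ^ (k - 1) < j"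
    have less: "q ^ i < j" if "i < k" for i
    proof -
      have "q ^ i \<le> q ^ (k - 1)"
        using that assms(1) by (intro power_increasing) auto
      then show ?thesis
        using j by linarith
    qed
    then show "coeff P j = 0"
      unfolding P_def coeff_sum coeff_monom using less by (force intro!: sum.neutral)
  qed
  moreover have "poly P x = (\<Sum>i<k. a i * x ^ (q ^ i))" for x
    unfolding P_def by (simp add: poly_sum poly_monom)
  ultimately show ?thesis
    using card_poly_roots_bound[of P] by simp
qed

lemma inj_on_restrict_pullback:
  assumes "D \<subseteq> f ` I"
  shows "inj_on (\<lambda>\<mu>. \<lambda>s\<in>I. if f s \<in> D then \<mu> (f s) else c) (\<Pi>\<^sub>E d\<in>D. B d)"
proof (rule inj_onI)
  fix \<mu> \<nu>
  assume \<mu>: "\<mu> \<in> (\<Pi>\<^sub>E d\<in>D. B d)" and \<nu>: "\<nu> \<in> (\<Pi>\<^sub>E d\<in>D. B d)"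
    and eq: "(\<lambda>s\<in>I. if f s \<in> D then \<mu> (f s) else c) = (\<lambda>s\<in>I. if f s \<in> D then \<nu> (f s) else c)"
  show "\<mu> = \<nu>"
  proof (rule PiE_ext[OF \<mu> \<nu>])
    fix d assume "d \<in> D"
    then obtain s where "s \<in> I" "d = f s"
      using assms by blast
    then show "\<mu> d = \<nu> d"
      using fun_cong[OF eq, of s] \<open>d \<in> D\<close> by simp
  qed
qed

lemma min_dist_eqI:
  assumes "finite C"
    and lower: "\<And>x y. x \<in> C \<Longrightarrow> y \<in> C \<Longrightarrow> x \<noteq> y \<Longrightarrow> d \<le> hamming_dist x y"
    and "x \<in> C" and "y \<in> C" and "x \<noteq> y" and "hamming_dist x y \<le> d"
  shows "min_dist C = d"
proof -
  let ?W = "{hamming_dist x y | x y. x \<in> C \<and> y \<in> C \<and> x \<noteq> y}"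
  have "?W \<subseteq> (\<lambda>(x, y). hamming_dist x y) ` (C \<times> C)"
    by auto
  then have "finite ?W"
    using assms(1) finite_subset by blast
  moreover have "hamming_dist x y \<in> ?W"
    using assms(3-5) by blast
  ultimately show ?thesis
    unfolding min_dist_def using lower assms(6)
    by (intro antisym) (auto intro: Min_le order.trans[OF _ assms(6)] iff: Min_ge_iff)
qed

lemma card_le_of_sum_le:
  fixes w :: "nat \<Rightarrow> nat"
  assumes A: "A \<subseteq> {..<L}" and w: "\<forall>t<L - 1. w t = r" "w (L - 1) = j" and "j \<le> r"
    and "sum w A < \<rho> * r + j"
  shows "card A \<le> \<rho>"
proof (cases "A = {}")
  case False
  define t1 where "t1 = (if L - 1 \<in> A then L - 1 else (SOME t. t \<in> A))"
  have t1: "t1 \<in> A"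
    using False by (auto simp: t1_def intro: someI_ex)
  have "finite A"
    using A finite_subset by blast
  have "w t = r" if "t \<in> A - {t1}" for t
  proof -
    have "t < L" "t \<noteq> L - 1"
      using that A by (auto simp: t1_def split: if_splits)
    then show ?thesis
      using w(1) by simp
  qed
  then have "(card A - 1) * r = (\<Sum>t\<in>A - {t1}. w t)"
    using t1 \<open>finite A\<close> by simp
  moreover have "j \<le> w t1"
  proof (cases "t1 = L - 1")
    case False
    moreover have "t1 < L"
      using t1 A by auto
    ultimately show ?thesis
      using w(1) \<open>j \<le> r\<close> by simp
  qed (use w(2) in simp)
  ultimately have "(card A - 1) * r + j \<le> sum w A"
    using sum.remove[OF \<open>finite A\<close> t1, of w] by linarith
  then have "(card A - 1) * r < \<rho> * r"
    using assms(5) by linarith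
  then have "card A - 1 < \<rho>"
    by simp
  then show ?thesis
    by linarith
qed simp

lemma sum_upper_segment:
  fixes w :: "nat \<Rightarrow> nat"
  assumes "\<forall>t<L - 1. w t = r" and "w (L - 1) = j" and "0 < \<rho>" and "\<rho> \<le> L"
  shows "(\<Sum>t\<in>{L - \<rho>..<L}. w t) = (\<rho> - 1) * r + j"
proof -
  have "{L - \<rho>..<L} = insert (L - 1) {L - \<rho>..<L - 1}"
    using assms(3,4) by auto
  then show ?thesis
    using assms by simp
qed

lemma budget_bounds:
  fixes m k r :: nat
  assumes "0 < r" and "r < k" and "k \<le> m"
    and "m mod r = 0 \<or> (\<exists>j. 1 \<le> j \<and> j < r \<and> m mod r = j \<and> k mod r = j)"
  defines "j \<equiv> if m mod r = 0 then r else m mod r"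
  shows "k - 1 < (k - 1) div r * r + j" and "((k - 1) div r - 1) * r + j \<le> k - 1"
    and "0 < (k - 1) div r" and "(k - 1) div r \<le> m div r" and "j \<le> r"
proof -
  define c where "c = (k - 1) div r"
  have c: "k - 1 = c * r + (k - 1) mod r" "(k - 1) mod r < r"
    using assms(1) by (simp_all add: c_def)
  show "0 < (k - 1) div r"
    using assms(1,2) by (simp add: div_greater_zero_iff)
  then have "r \<le> c * r"
    by (simp add: c_def)
  show "(k - 1) div r \<le> m div r"
    using assms(3) by (simp add: div_le_mono)
  show "j \<le> r"
    using assms(1) by (simp add: j_def)
  have "k - 1 < c * r + j \<and> (c - 1) * r + j \<le> k - 1"
  proof (cases "m mod r = 0")
    case True
    then show ?thesis
      using c \<open>r \<le> c * r\<close> by (simp add: j_def diff_mult_distrib)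
  next
    case False
    with assms(4) have "k mod r = j" "1 \<le> j"
      by (auto simp: j_def)
    \<comment> \<open>\<open>k \<equiv> j \<noteq> 0 (mod r)\<close> forces \<open>(k - 1) mod r = j - 1\<close>\<close>
    then have "Suc ((k - 1) mod r) = j"
      using mod_Suc[of "k - 1" r] assms(2) by (simp split: if_splits)
    then show ?thesis
      using c \<open>r \<le> c * r\<close> by (simp add: diff_mult_distrib)
  qed
  then show "k - 1 < (k - 1) div r * r + j" and "((k - 1) div r - 1) * r + j \<le> k - 1"
    by (simp_all add: c_def)
qed

lemma ceiling_of_nat_divide:
  assumes "0 < k" and "0 < r"
  shows "\<lceil>real k / real r\<rceil> = int ((k - 1) div r) + 1"
proof (rule ceiling_unique)
  define c where "c = (k - 1) div r"
  have "c * r < k" "k \<le> c * r + r"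
    using assms div_mult_mod_eq[of "k - 1" r] mod_less_divisor[of r "k - 1"]
    unfolding c_def by linarith+
  then have "real c * real r < real k" "real k \<le> real c * real r + real r"
    by (simp_all flip: of_nat_mult of_nat_add of_nat_1)
  then show "real_of_int (int c + 1) - 1 < real k / real r"
    and "real k / real r \<le> real_of_int (int c + 1)"
    using assms(2) by (simp_all add: field_simps c_def)
qed

lemma groups_within_budget:
  fixes Gs :: "nat set list" and m k r :: nat
  assumes r: "0 < r" "r < k" and km: "k \<le> m"
    and cases: "m mod r = 0 \<or> (\<exists>j. 1 \<le> j \<and> j < r \<and> m mod r = j \<and> k mod r = j)"
    and Gs_len: "length Gs = m div r + (if m mod r = 0 then 0 else 1)"
    and Gs_card: "\<forall>i<length Gs. card (Gs ! i) = (if i < m div r then r else m mod r)"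
  shows "\<forall>A \<subseteq> {..<length Gs}. (\<Sum>t\<in>A. card (Gs ! t)) \<le> k - 1 \<longrightarrow> card A \<le> (k - 1) div r"
    and "\<exists>T \<subseteq> {..<length Gs}. (\<Sum>t\<in>T. card (Gs ! t)) \<le> k - 1 \<and> card T = (k - 1) div r"
proof -
  define L \<rho> j where "L = length Gs" and "\<rho> = (k - 1) div r"
    and "j = (if m mod r = 0 then r else m mod r)"
  note bounds = budget_bounds[OF r km cases, folded \<rho>_def j_def]
  have "0 < m div r"
    using r km by (simp add: div_greater_zero_iff)
  have sizes: "\<forall>t<L - 1. card (Gs ! t) = r" "card (Gs ! (L - 1)) = j" "\<rho> \<le> L"
    using Gs_len Gs_card bounds(4) \<open>0 < m div r\<close> by (auto simp: L_def j_def)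
  show "\<forall>A \<subseteq> {..<length Gs}. (\<Sum>t\<in>A. card (Gs ! t)) \<le> k - 1 \<longrightarrow> card A \<le> (k - 1) div r"
    using card_le_of_sum_le[OF _ sizes(1,2) bounds(5)] bounds(1) by (simp add: L_def \<rho>_def)
  have "(\<Sum>t\<in>{L - \<rho>..<L}. card (Gs ! t)) \<le> k - 1"
    using sum_upper_segment[OF sizes(1,2) bounds(3) sizes(3)] bounds(2) by simp
  moreover have "card {L - \<rho>..<L} = \<rho>"
    using sizes(3) by simp
  ultimately show "\<exists>T \<subseteq> {..<length Gs}. (\<Sum>t\<in>T. card (Gs ! t)) \<le> k - 1 \<and> card T = (k - 1) div r"
    by (intro exI[of _ "{L - \<rho>..<L}"]) (auto simp: L_def \<rho>_def)
qed

section \<open>Zeros of Gabidulin and local codewords\<close>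

locale gabidulin_code =
  fixes q e N m k :: nat and gs :: "'a::{finite,field} list"
  assumes q_eq: "q = CHAR('a) ^ e" and e_pos: "0 < e"
    and card_eq: "CARD('a) = q ^ N" and N_pos: "0 < N"
    and length_gs: "length gs = m" and gs_indep: "lin_indep_over_Fq q gs"
    and k_pos: "0 < k" and k_le_m: "k \<le> m"
begin

abbreviation Fq :: "'a set" where
  "Fq \<equiv> base_field q"

definition linpoly :: "(nat \<Rightarrow> 'a) \<Rightarrow> 'a \<Rightarrow> 'a" where
  "linpoly a x = (\<Sum>i<k. a i * x ^ (q ^ i))"

definition coord :: "(nat \<Rightarrow> 'a) \<Rightarrow> nat \<Rightarrow> 'a" where
  "coord a s = linpoly a (gs ! s)"

lemma two_le_q: "2 \<le> q"
  using two_le_prime_power[OF prime_CHAR_finite_field e_pos] q_eq by simp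

lemma Fq_power_eq: "x \<in> Fq \<Longrightarrow> x ^ (q ^ i) = x"
proof (induction i)
  case (Suc i)
  then show ?case
    by (simp add: base_field_def power_mult mult.commute[of q])
qed simp

lemma Fq_diff: "x \<in> Fq \<Longrightarrow> y \<in> Fq \<Longrightarrow> x - y \<in> Fq"
  using frobenius_diff[OF prime_CHAR_finite_field q_eq, of x y 1] by (simp add: base_field_def)

lemma zero_in_Fq: "0 \<in> Fq"
  using two_le_q by (simp add: base_field_def)

lemma linpoly_Fq_linear:
  assumes "\<forall>s<m. l s \<in> Fq"
  shows "linpoly a (\<Sum>s<m. l s * gs ! s) = (\<Sum>s<m. l s * coord a s)"
proof -
  have "linpoly a (\<Sum>s<m. l s * gs ! s) = (\<Sum>i<k. a i * (\<Sum>s<m. l s * (gs ! s) ^ (q ^ i)))"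
    unfolding linpoly_def frobenius_sum[OF prime_CHAR_finite_field q_eq]
    using assms by (simp add: power_mult_distrib Fq_power_eq)
  also have "\<dots> = (\<Sum>s<m. l s * coord a s)"
    unfolding coord_def linpoly_def sum_distrib_left
    by (subst sum.swap) (simp add: mult_ac)
  finally show ?thesis .
qed

lemma coord_diff: "coord (\<lambda>i. a i - b i) s = coord a s - coord b s"
  unfolding coord_def linpoly_def by (simp add: left_diff_distrib sum_subtractf)

lemma card_coord_relations_le:
  assumes nz: "\<exists>i<k. a i \<noteq> 0"
    and S: "S \<subseteq> (\<Pi>\<^sub>E s\<in>{..<m}. Fq)" and rel: "\<forall>l\<in>S. (\<Sum>s<m. l s * coord a s) = 0"
  shows "card S \<le> q ^ (k - 1)"
proof -
  define ev where "ev l = (\<Sum>s<m. l s * gs ! s)" for l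
  have "inj_on ev S"
  proof (rule inj_onI)
    fix l l' assume l: "l \<in> S" "l' \<in> S" and "ev l = ev l'"
    then have "(\<Sum>i<length gs. (l i - l' i) * gs ! i) = 0"
      unfolding ev_def length_gs by (simp add: left_diff_distrib sum_subtractf)
    moreover have "\<forall>i<length gs. l i - l' i \<in> Fq"
      using l S length_gs by (auto intro!: Fq_diff simp: PiE_iff)
    ultimately have "\<forall>i<m. l i = l' i"
      using gs_indep length_gs unfolding lin_indep_over_Fq_def by auto
    then show "l = l'"
      using l S by (intro PiE_ext[of l "{..<m}" "\<lambda>_. Fq"]) auto
  qed
  moreover have "ev ` S \<subseteq> {x. linpoly a x = 0}"
    using S rel linpoly_Fq_linear by (force simp: ev_def PiE_iff)
  then have "card (ev ` S) \<le> card {x. linpoly a x = 0}"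
    by (intro card_mono) auto
  moreover have "card {x. linpoly a x = 0} \<le> q ^ (k - 1)"
    unfolding linpoly_def by (rule card_linearized_poly_roots_le[OF two_le_q nz])
  ultimately show ?thesis
    by (simp add: card_image)
qed

lemma card_PiE_Fq_ge: "finite D \<Longrightarrow> q ^ card D \<le> card (\<Pi>\<^sub>E s\<in>D. Fq)"
  using card_base_field_ge[OF q_eq e_pos card_eq N_pos] by (simp add: card_PiE power_mono)

lemma exists_linpoly_vanishing:
  assumes "finite Z" and "card Z < k"
  obtains a where "\<exists>i<k. a i \<noteq> 0" and "\<forall>s\<in>Z. coord a s = 0"
proof -
  \<comment> \<open>pigeonhole: there are more coefficient vectors than value patterns on \<open>Z\<close>\<close>
  define \<phi> where "\<phi> a = restrict (coord a) Z" for a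
  have "card (\<Pi>\<^sub>E s\<in>Z. UNIV :: 'a set) < card (\<Pi>\<^sub>E i\<in>{..<k}. UNIV :: 'a set)"
  proof -
    have "2 \<le> q ^ N"
      using two_le_q N_pos self_le_power[of q N] by linarith
    then have "2 \<le> CARD('a)"
      by (simp only: card_eq)
    then have "CARD('a) ^ card Z < CARD('a) ^ k"
      using assms(2) by (intro power_strict_increasing) linarith+
    then show ?thesis
      using card_PiE[OF assms(1), of "\<lambda>_. UNIV :: 'a set"]
        card_PiE[of "{..<k}" "\<lambda>_. UNIV :: 'a set"] by (simp only: prod_constant card_lessThan finite_lessThan)
  qed
  moreover have "\<phi> ` (\<Pi>\<^sub>E i\<in>{..<k}. UNIV) \<subseteq> (\<Pi>\<^sub>E s\<in>Z. UNIV)"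
    unfolding \<phi>_def by (simp add: image_subset_iff)
  moreover have "finite (\<Pi>\<^sub>E s\<in>Z. UNIV :: 'a set)"
    using assms(1) by (rule finite_PiE) simp
  ultimately have "\<not> inj_on \<phi> (\<Pi>\<^sub>E i\<in>{..<k}. UNIV)"
    by (meson card_inj_on_le leD)
  then obtain a b where ab: "a \<in> (\<Pi>\<^sub>E i\<in>{..<k}. UNIV)" "b \<in> (\<Pi>\<^sub>E i\<in>{..<k}. UNIV)"
    "a \<noteq> b" "\<phi> a = \<phi> b"
    unfolding inj_on_def by blast
  have "\<exists>i<k. a i - b i \<noteq> 0"
    using ab(3) PiE_ext[OF ab(1,2)] by auto
  moreover have "coord (\<lambda>i. a i - b i) s = 0" if "s \<in> Z" for s
    using fun_cong[OF ab(4), of s] that by (simp add: \<phi>_def coord_diff)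
  ultimately show thesis
    using that[of "\<lambda>i. a i - b i"] by blast
qed

lemma card_le_of_pulled_back_relations:
  fixes f :: "nat \<Rightarrow> 'b"
  assumes nz: "\<exists>i<k. a i \<noteq> 0" and "finite D" and "D \<subseteq> f ` {..<m}"
    and rel: "\<And>\<mu>. (\<Sum>s<m. (if f s \<in> D then \<mu> (f s) else 0) * coord a s) = 0"
  shows "card D \<le> k - 1"
proof -
  define \<Phi> where "\<Phi> \<mu> = (\<lambda>s\<in>{..<m}. if f s \<in> D then \<mu> (f s) else 0)" for \<mu> :: "'b \<Rightarrow> 'a"
  have inj: "inj_on \<Phi> (\<Pi>\<^sub>E d\<in>D. Fq)"
    unfolding \<Phi>_def using assms(3) by (rule inj_on_restrict_pullback)
  have sub: "\<Phi> ` (\<Pi>\<^sub>E d\<in>D. Fq) \<subseteq> (\<Pi>\<^sub>E s\<in>{..<m}. Fq)"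
    unfolding \<Phi>_def by (auto simp: zero_in_Fq split: if_split_asm)
  have "(\<Sum>s<m. \<Phi> \<mu> s * coord a s) = 0" for \<mu>
    using rel[of \<mu>] by (simp add: \<Phi>_def)
  then have "card (\<Phi> ` (\<Pi>\<^sub>E d\<in>D. Fq)) \<le> q ^ (k - 1)"
    by (intro card_coord_relations_le[OF nz sub]) blast
  moreover have "q ^ card D \<le> card (\<Phi> ` (\<Pi>\<^sub>E d\<in>D. Fq))"
    using card_PiE_Fq_ge[OF assms(2)] card_image[OF inj] by simp
  ultimately have "q ^ card D \<le> q ^ (k - 1)"
    by linarith
  then show ?thesis
    using two_le_q by (auto intro: power_le_imp_le_exp)
qed

end

locale local_gabidulin = gabidulin_code q e N m k gs
  for q e N m k and gs :: "'a::{finite,field} list" +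
  fixes Gs :: "nat set list"
  assumes Gs_disjoint: "\<forall>i<length Gs. \<forall>i'<length Gs. i \<noteq> i' \<longrightarrow> Gs ! i \<inter> Gs ! i' = {}"
    and Gs_cover: "\<Union> (set Gs) = {..<m}"
begin

abbreviation L :: nat where
  "L \<equiv> length Gs"

definition group_of :: "nat \<Rightarrow> nat" where
  "group_of s = (SOME t. t < L \<and> s \<in> Gs ! t)"

definition local_coord :: "(nat \<Rightarrow> 'a) \<Rightarrow> nat \<Rightarrow> 'a" where
  "local_coord a i = (if i < m then coord a i else (\<Sum>s\<in>Gs ! (i - m). coord a s))"

definition local_word :: "(nat \<Rightarrow> 'a) \<Rightarrow> 'a list" where
  "local_word a = map (local_coord a) [0..<m + L]"

definition coord_zeros :: "(nat \<Rightarrow> 'a) \<Rightarrow> nat set" where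
  "coord_zeros a = {s. s < m \<and> coord a s = 0}"

definition parity_zeros :: "(nat \<Rightarrow> 'a) \<Rightarrow> nat set" where
  "parity_zeros a = {t. t < L \<and> (\<Sum>s\<in>Gs ! t. coord a s) = 0}"

definition zero_groups :: "(nat \<Rightarrow> 'a) \<Rightarrow> nat set" where
  "zero_groups a = {t. t < L \<and> Gs ! t \<subseteq> coord_zeros a}"

definition local_zeros :: "(nat \<Rightarrow> 'a) \<Rightarrow> nat set" where
  "local_zeros a = {i. i < m + L \<and> local_coord a i = 0}"

lemma group_subset: "t < L \<Longrightarrow> Gs ! t \<subseteq> {..<m}"
  using Gs_cover nth_mem by blast

lemma finite_group: "t < L \<Longrightarrow> finite (Gs ! t)"
  using group_subset finite_subset by blast

lemma UN_groups: "(\<Union>t<L. Gs ! t) = {..<m}"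
  using Gs_cover by (auto simp: set_conv_nth)

lemma group_of: "s < m \<Longrightarrow> group_of s < L \<and> s \<in> Gs ! group_of s"
  unfolding group_of_def by (rule someI_ex) (use UN_groups in blast)

lemma group_of_eq: "t < L \<Longrightarrow> s \<in> Gs ! t \<Longrightarrow> group_of s = t"
  using group_of[of s] group_subset Gs_disjoint by blast

lemma sum_over_groups:
  fixes w c :: "nat \<Rightarrow> 'b::semiring_0"
  shows "(\<Sum>s<m. w (group_of s) * c s) = (\<Sum>t<L. w t * (\<Sum>s\<in>Gs ! t. c s))"
proof -
  have "(\<Sum>s<m. w (group_of s) * c s) = (\<Sum>t<L. \<Sum>s\<in>Gs ! t. w (group_of s) * c s)"
    unfolding UN_groups[symmetric] by (rule sum.UNION_disjoint) (use finite_group Gs_disjoint in auto)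
  also have "\<dots> = (\<Sum>t<L. w t * (\<Sum>s\<in>Gs ! t. c s))"
    by (intro sum.cong refl) (simp add: sum_distrib_left group_of_eq)
  finally show ?thesis .
qed

lemma card_coord_zeros_le:
  assumes nz: "\<exists>i<k. a i \<noteq> 0"
  shows "card (coord_zeros a) + card (parity_zeros a - zero_groups a) \<le> k - 1"
proof -
  define Z0 Z1 A where "Z0 = coord_zeros a" and "Z1 = parity_zeros a" and "A = zero_groups a"
  note defs = Z0_def Z1_def A_def coord_zeros_def parity_zeros_def zero_groups_def
  define D where "D = Z0 \<union> (+) m ` (Z1 - A)"
  \<comment> \<open>a zero coordinate carries its own coefficient, any other coordinate that of its group\<close>
  define idx where "idx s = (if s \<in> Z0 then s else m + group_of s)" for s
  have "card D \<le> k - 1"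
  proof (rule card_le_of_pulled_back_relations[OF nz])
    show "finite D"
      unfolding D_def defs by simp
    show "D \<subseteq> idx ` {..<m}"
    proof
      fix d assume "d \<in> D"
      show "d \<in> idx ` {..<m}"
      proof (cases "d \<in> Z0")
        case True
        then show ?thesis
          by (intro image_eqI[of d idx d]) (auto simp: idx_def defs)
      next
        case False
        then obtain t where t: "t < L" "t \<notin> A" "d = m + t"
          using \<open>d \<in> D\<close> by (auto simp: D_def defs)
        then obtain u where "u \<in> Gs ! t" "u \<notin> Z0"
          by (auto simp: defs)
        then have "u < m" "idx u = d"
          using t group_subset group_of_eq by (auto simp: idx_def)
        then show ?thesis
          by blast
      qed
    qed
    fix \<mu> :: "nat \<Rightarrow> 'a"
    define w where "w t = (if t \<in> Z1 - A then \<mu> (m + t) else 0)" for t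
    have coeff: "(if idx s \<in> D then \<mu> (idx s) else 0) * coord a s = w (group_of s) * coord a s" for s
    proof (cases "s \<in> Z0")
      case False
      have "m + group_of s \<in> D \<longleftrightarrow> group_of s \<in> Z1 - A"
        by (auto simp: D_def defs)
      with False show ?thesis
        by (simp add: w_def idx_def)
    qed (simp add: defs)
    have "(\<Sum>s<m. (if idx s \<in> D then \<mu> (idx s) else 0) * coord a s)
        = (\<Sum>t<L. w t * (\<Sum>s\<in>Gs ! t. coord a s))"
      by (simp only: coeff sum_over_groups)
    also have "\<dots> = 0"
      by (intro sum.neutral) (auto simp: w_def defs)
    finally show "(\<Sum>s<m. (if idx s \<in> D then \<mu> (idx s) else 0) * coord a s) = 0" .
  qed
  moreover have "card D = card Z0 + card (Z1 - A)"
    unfolding D_def by (subst card_Un_disjoint) (auto simp: defs card_image)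
  ultimately show ?thesis
    by (simp add: Z0_def Z1_def A_def)
qed

lemma coord_nonzero:
  assumes "\<exists>i<k. a i \<noteq> 0"
  obtains s where "s < m" and "coord a s \<noteq> 0"
proof -
  have "card (coord_zeros a) < m"
    using card_coord_zeros_le[OF assms] k_le_m k_pos by linarith
  then have "\<not> {..<m} \<subseteq> coord_zeros a"
    using card_mono[of "coord_zeros a" "{..<m}"] by (auto simp: coord_zeros_def)
  then obtain s where "s < m" "s \<notin> coord_zeros a"
    by auto
  then show thesis
    using that by (simp add: coord_zeros_def)
qed

lemma card_local_zeros_le:
  assumes nz: "\<exists>i<k. a i \<noteq> 0"
  obtains A where "A \<subseteq> {..<L}" and "card (local_zeros a) \<le> k - 1 + card A"
    and "(\<Sum>t\<in>A. card (Gs ! t)) \<le> k - 1"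
proof -
  define Z0 Z1 A where "Z0 = coord_zeros a" and "Z1 = parity_zeros a" and "A = zero_groups a"
  note defs = Z0_def Z1_def A_def coord_zeros_def parity_zeros_def zero_groups_def
  have "A \<subseteq> Z1"
    unfolding defs by (auto intro!: sum.neutral)
  have "local_zeros a = Z0 \<union> (+) m ` Z1"
  proof (rule set_eqI)
    fix i
    show "i \<in> local_zeros a \<longleftrightarrow> i \<in> Z0 \<union> (+) m ` Z1"
      by (cases "i < m")
        (auto simp: local_zeros_def local_coord_def defs intro!: image_eqI[of i "(+) m" "i - m"])
  qed
  then have "card (local_zeros a) = card Z0 + card Z1"
    by (simp only:, subst card_Un_disjoint) (auto simp: card_image defs)
  moreover have "card Z1 = card (Z1 - A) + card A"
    using \<open>A \<subseteq> Z1\<close> card_Diff_subset[of A Z1] card_mono[of Z1 A] by (simp add: defs)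
  moreover have "card Z0 + card (Z1 - A) \<le> k - 1"
    using card_coord_zeros_le[OF nz] by (simp add: Z0_def Z1_def A_def)
  ultimately have "card (local_zeros a) \<le> k - 1 + card A"
    by linarith
  moreover have "(\<Sum>t\<in>A. card (Gs ! t)) = card (\<Union>t\<in>A. Gs ! t)"
    by (rule card_UN_disjoint[symmetric]) (use Gs_disjoint finite_group in \<open>auto simp: defs\<close>)
  moreover have "card (\<Union>t\<in>A. Gs ! t) \<le> card Z0"
    by (intro card_mono) (auto simp: defs)
  moreover have "A \<subseteq> {..<L}"
    by (auto simp: defs)
  ultimately show thesis
    using that \<open>card Z0 + card (Z1 - A) \<le> k - 1\<close> by simp
qed

lemma exists_many_local_zeros:
  assumes T: "T \<subseteq> {..<L}" and budget: "(\<Sum>t\<in>T. card (Gs ! t)) \<le> k - 1"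
  obtains a where "\<exists>i<k. a i \<noteq> 0" and "k - 1 + card T \<le> card (local_zeros a)"
proof -
  \<comment> \<open>make the codeword vanish on the groups in \<open>T\<close>, topped up to \<open>k - 1\<close> positions\<close>
  define U where "U = (\<Union>t\<in>T. Gs ! t)"
  have "finite T"
    using T finite_subset by blast
  have card_U: "card U = (\<Sum>t\<in>T. card (Gs ! t))"
    unfolding U_def by (rule card_UN_disjoint) (use Gs_disjoint finite_group T \<open>finite T\<close> in auto)
  have U: "U \<subseteq> {..<m}"
    unfolding U_def using group_subset T by auto
  then have "k - 1 - card U \<le> card ({..<m} - U)"
    using k_le_m card_U budget by (simp add: card_Diff_subset finite_subset)
  then obtain V where V: "V \<subseteq> {..<m} - U" "card V = k - 1 - card U"
    by (meson obtain_subset_with_card_n)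
  define Z where "Z = U \<union> V"
  have Z: "Z \<subseteq> {..<m}" "finite Z"
    unfolding Z_def using U V finite_subset by auto
  have card_Z: "card Z = k - 1"
    unfolding Z_def using V card_U budget U Z(2) by (subst card_Un_disjoint) (auto simp: Z_def)
  obtain a where a: "\<exists>i<k. a i \<noteq> 0" "\<forall>s\<in>Z. coord a s = 0"
    using exists_linpoly_vanishing[OF Z(2)] card_Z k_pos by auto
  have "(\<Sum>s\<in>Gs ! t. coord a s) = 0" if "t \<in> T" for t
  proof -
    have "Gs ! t \<subseteq> Z"
      using that unfolding Z_def U_def by auto
    then show ?thesis
      using a(2) by (intro sum.neutral) blast
  qed
  then have "Z \<union> (+) m ` T \<subseteq> local_zeros a"
    using Z(1) T a(2) by (auto simp: local_zeros_def local_coord_def)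
  then have "card (Z \<union> (+) m ` T) \<le> card (local_zeros a)"
    by (intro card_mono) (simp_all add: local_zeros_def)
  moreover have "card (Z \<union> (+) m ` T) = k - 1 + card T"
    using Z \<open>finite T\<close> card_Z by (subst card_Un_disjoint) (auto simp: card_image)
  ultimately show thesis
    using that a(1) by simp
qed

lemma local_coord_diff:
  "local_coord (\<lambda>i. a i - b i) i = local_coord a i - local_coord b i"
  by (simp add: local_coord_def coord_diff sum_subtractf)

lemma length_local_word: "length (local_word a) = m + L"
  by (simp add: local_word_def)

lemma nth_local_word: "i < m + L \<Longrightarrow> local_word a ! i = local_coord a i"
  by (simp add: local_word_def)

lemma hamming_dist_local_word:
  "hamming_dist (local_word a) (local_word b) = m + L - card (local_zeros (\<lambda>i. a i - b i))"
proof -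
  have "{i. i < m + L \<and> local_word a ! i \<noteq> local_word b ! i}
      = {..<m + L} - local_zeros (\<lambda>i. a i - b i)"
    by (auto simp: nth_local_word local_zeros_def local_coord_diff)
  moreover have "local_zeros (\<lambda>i. a i - b i) \<subseteq> {..<m + L}"
    by (auto simp: local_zeros_def)
  ultimately show ?thesis
    unfolding hamming_dist_def length_local_word by (simp add: card_Diff_subset finite_subset)
qed

lemma finite_local_words: "finite (range local_word)"
proof (rule finite_subset)
  show "range local_word \<subseteq> {xs. set xs \<subseteq> UNIV \<and> length xs = m + L}"
    by (auto simp: length_local_word)
qed (rule finite_lists_length_eq, simp)

lemma local_word_cong: "\<forall>i<k. a i = b i \<Longrightarrow> local_word a = local_word b"
  unfolding local_word_def local_coord_def coord_def linpoly_def by simp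

lemma hamming_dist_local_word_ge:
  assumes upper: "\<forall>A \<subseteq> {..<L}. (\<Sum>t\<in>A. card (Gs ! t)) \<le> k - 1 \<longrightarrow> card A \<le> \<rho>"
    and "local_word a \<noteq> local_word b"
  shows "m + L - (k - 1) - \<rho> \<le> hamming_dist (local_word a) (local_word b)"
proof -
  have "\<exists>i<k. a i - b i \<noteq> 0"
    using assms(2) local_word_cong[of a b] by auto
  then obtain A where A: "A \<subseteq> {..<L}" "(\<Sum>t\<in>A. card (Gs ! t)) \<le> k - 1"
    and zeros: "card (local_zeros (\<lambda>i. a i - b i)) \<le> k - 1 + card A"
    by (rule card_local_zeros_le)
  from upper A have "card A \<le> \<rho>"
    by blast
  with zeros show ?thesis
    unfolding hamming_dist_local_word by linarith
qed

lemma min_dist_local_words: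
  assumes upper: "\<forall>A \<subseteq> {..<L}. (\<Sum>t\<in>A. card (Gs ! t)) \<le> k - 1 \<longrightarrow> card A \<le> \<rho>"
    and attained: "T \<subseteq> {..<L}" "(\<Sum>t\<in>T. card (Gs ! t)) \<le> k - 1" "card T = \<rho>"
  shows "min_dist (range local_word) = m + L - (k - 1) - \<rho>"
proof -
  obtain a where a: "\<exists>i<k. a i \<noteq> 0" "k - 1 + \<rho> \<le> card (local_zeros a)"
    using exists_many_local_zeros[OF attained(1,2)] attained(3) by blast
  obtain s where s: "s < m" "coord a s \<noteq> 0"
    using coord_nonzero[OF a(1)] .
  have "local_word a ! s \<noteq> local_word (\<lambda>_. 0) ! s"
    using s by (simp add: nth_local_word local_coord_def coord_def linpoly_def)
  then have "local_word a \<noteq> local_word (\<lambda>_. 0)"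
    by metis
  moreover have "hamming_dist (local_word a) (local_word (\<lambda>_. 0)) \<le> m + L - (k - 1) - \<rho>"
    unfolding hamming_dist_local_word using a(2) by simp
  ultimately show ?thesis
    using hamming_dist_local_word_ge[OF upper] finite_local_words by (intro min_dist_eqI) auto
qed

lemma local_code_eq: "local_code Gs (gabidulin q k gs) = range local_word"
proof -
  have "c @ map (\<lambda>G. \<Sum>s\<in>G. c ! s) Gs = local_word a"
    if c: "c = map (\<lambda>g. \<Sum>i<k. a i * g ^ (q ^ i)) gs" for a c
  proof -
    have length_c: "length c = m"
      by (simp add: c length_gs)
    have c_nth: "c ! s = coord a s" if "s < m" for s
      using that by (simp add: c coord_def linpoly_def length_gs)
    have "(c @ map (\<lambda>G. \<Sum>s\<in>G. c ! s) Gs) ! i = local_coord a i" if "i < m + L" for i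
    proof (cases "i < m")
      case True
      then show ?thesis
        by (simp add: nth_append length_c c_nth local_coord_def)
    next
      case False
      then have "i - m < L"
        using that by simp
      then have "(\<Sum>s\<in>Gs ! (i - m). c ! s) = (\<Sum>s\<in>Gs ! (i - m). coord a s)"
        using group_subset c_nth by (intro sum.cong) auto
      with False show ?thesis
        by (simp add: nth_append length_c local_coord_def \<open>i - m < L\<close>)
    qed
    then show ?thesis
      by (intro nth_equalityI) (simp_all add: length_c length_local_word nth_local_word)
  qed
  then show ?thesis
    unfolding local_code_def gabidulin_def Setcompr_eq_image
    by (simp add: full_SetCompr_eq image_image)
qed

lemma local_coord_linear:
  "local_coord a t = (\<Sum>j<k. a j * local_coord (\<lambda>i. if i = j then 1 else 0) t)"
proof -
  have unit: "coord (\<lambda>i. if i = j then 1 else 0) s = (gs ! s) ^ (q ^ j)" if "j < k" for j s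
  proof -
    have "coord (\<lambda>i. if i = j then 1 else 0) s = (\<Sum>i<k. if i = j then (gs ! s) ^ (q ^ i) else 0)"
      unfolding coord_def linpoly_def by (intro sum.cong) auto
    with that show ?thesis
      by simp
  qed
  have coord: "coord a s = (\<Sum>j<k. a j * coord (\<lambda>i. if i = j then 1 else 0) s)" for s
    unfolding coord_def[of a] linpoly_def by (intro sum.cong) (simp_all add: unit)
  show ?thesis
  proof (cases "t < m")
    case True
    then show ?thesis
      by (simp add: local_coord_def coord)
  next
    case False
    have "(\<Sum>s\<in>Gs ! (t - m). coord a s)
        = (\<Sum>j<k. \<Sum>s\<in>Gs ! (t - m). a j * coord (\<lambda>i. if i = j then 1 else 0) s)"
      unfolding coord by (rule sum.swap)
    with False show ?thesis
      by (simp add: local_coord_def sum_distrib_left)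
  qed
qed

lemma linear_code_dim_local_words: "linear_code_dim (m + L) k (range local_word)"
proof -
  define B where "B = map (\<lambda>j. local_word (\<lambda>i. if i = j then 1 else 0)) [0..<k]"
  have lincomb: "lincomb (m + L) a B = local_word a" for a
    by (intro nth_equalityI)
      (simp_all add: lincomb_def B_def length_local_word nth_local_word local_coord_linear[of a])
  have "\<forall>i<k. a i = 0" if "lincomb (m + L) a B = replicate (m + L) 0" for a
  proof (rule ccontr)
    assume "\<not> (\<forall>i<k. a i = 0)"
    then obtain s where "s < m" "coord a s \<noteq> 0"
      using coord_nonzero by blast
    moreover have "local_word a ! s = 0"
      using that \<open>s < m\<close> by (simp add: lincomb)
    ultimately show False
      by (simp add: nth_local_word local_coord_def)
  qed
  moreover have "range local_word = {lincomb (m + L) a B | a. True}"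
    unfolding lincomb by auto
  ultimately show ?thesis
    unfolding linear_code_dim_def
    by (intro exI[of _ B]) (auto simp: B_def length_local_word)
qed

end

theorem theorem2:
  fixes q N m k r :: nat
    and gs :: "'a::{finite,field} list"
    and Gs :: "nat set list"
  assumes q: "prime_power q"
    and card_field: "CARD('a) = q ^ N"
    and pos: "N > 0" "m > 0" "k > 0" "r > 0"
    and mN: "m \<le> N" and km: "k \<le> m" and rk: "r < k"
    and gs_len: "length gs = m"
    and gs_indep: "lin_indep_over_Fq q gs"
    and cases: "m mod r = 0 \<or> (\<exists>j. 1 \<le> j \<and> j < r \<and> m mod r = j \<and> k mod r = j)"
    and Gs_len: "length Gs = m div r + (if m mod r = 0 then 0 else 1)"
    and Gs_card: "\<forall>i<length Gs. card (Gs ! i) = (if i < m div r then r else m mod r)"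
    and Gs_disj: "\<forall>i<length Gs. \<forall>i'<length Gs. i \<noteq> i' \<longrightarrow> Gs ! i \<inter> Gs ! i' = {}"
    and Gs_cover: "\<Union> (set Gs) = {..<m}"
  shows "linear_code_dim (m + length Gs) k (local_code Gs (gabidulin q k gs)) \<and>
         int (min_dist (local_code Gs (gabidulin q k gs)))
           = int (m + length Gs) - int k + 2 - ceiling (real k / real r)"
proof -
  obtain e where "0 < e" and "q = CHAR('a) ^ e"
    using prime_power_card_eq_CHAR_power[OF q card_field pos(1)] .
  then interpret local_gabidulin q e N m k gs Gs
    using card_field pos gs_len gs_indep km Gs_disj Gs_cover by unfold_locales auto
  define \<rho> where "\<rho> = (k - 1) div r"
  note groups = groups_within_budget[OF pos(4) rk km cases Gs_len Gs_card, folded \<rho>_def]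
  then obtain T where T: "T \<subseteq> {..<L}" "(\<Sum>t\<in>T. card (Gs ! t)) \<le> k - 1" "card T = \<rho>"
    by blast
  have "min_dist (range local_word) = m + L - (k - 1) - \<rho>"
    using min_dist_local_words[OF groups(1) T] .
  moreover have "\<rho> \<le> L"
    using T(1,3) card_mono[of "{..<L}" T] by simp
  moreover have "\<lceil>real k / real r\<rceil> = int \<rho> + 1"
    unfolding \<rho>_def using pos(3,4) by (rule ceiling_of_nat_divide)
  ultimately show ?thesis
    using linear_code_dim_local_words local_code_eq km pos(3) by (simp add: of_nat_diff)
qed

end
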